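(* Let $\mathcal A$ be an abelian category. Let $0\to F\xrightarrow{i} M\xrightarrow{d} M/F\to 0$ be a fully invariant short exact sequence and $0\to G\xrightarrow{j} M\xrightarrow{p} M/G\to 0$ a short exact sequence in $\mathcal A$. (1) Let $u:F\cap G\to G$ be the inclusion monomorphism. (i) If the second short exact sequence is also fully invariant, then the inclusion monomorphism $ju:F\cap G\to M$ is fully invariant. (ii) If every morphism $G\to G$ can be extended to a morphism $M\to M$, then $u:F\cap G\to G$ is fully invariant. (2) Let $q:M/G\to M/(F+G)$ be the induced epimorphism. (i) If the second short exact sequence is also fully invariant, then the induced epimorphism $qp:M\to M/(F+G)$ is fully coinvariant. (ii) If every morphism $M/G\to M/G$ can be lifted to a morphism $M\to M$, then $q:M/G\to M/(F+G)$ is fully coinvariant.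
   Context: A monomorphism $i:K\to M$ in an abelian category is called fully invariant if for every morphism $h:M\to M$ there is a morphism $\alpha:K\to K$ with $hi=i\alpha$. An epimorphism $d:M\to C$ is called fully coinvariant if for every morphism $h:M\to M$ there is $\beta:C\to C$ with $dh=\beta d$. A short exact sequence $0\to F\xrightarrow{i} M\xrightarrow{d} C\to 0$ is called fully invariant if $i$ is fully invariant (equivalently, $d$ is fully coinvariant). *)

theory Defs
  imports Main
begin

text \<open>A (small, explicitly given) preadditive category: objects, arrows, source/target,
  composition (cmp g f = g after f), identities, addition of parallel arrows and zero arrows.\<close>

record ('o,'m) cat =
  Ob  :: "'o set"
  Ar  :: "'m set"
  src :: "'m \<Rightarrow> 'o"
  tgt :: "'m \<Rightarrow> 'o"
  cmp :: "'m \<Rightarrow> 'm \<Rightarrow> 'm"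
  idm :: "'o \<Rightarrow> 'm"
  add :: "'m \<Rightarrow> 'm \<Rightarrow> 'm"
  zro :: "'o \<Rightarrow> 'o \<Rightarrow> 'm"

definition hom :: "('o,'m) cat \<Rightarrow> 'o \<Rightarrow> 'o \<Rightarrow> 'm set" where
  "hom C a b = {f \<in> Ar C. src C f = a \<and> tgt C f = b}"

definition category :: "('o,'m) cat \<Rightarrow> bool" where
  "category C \<longleftrightarrow>
     (\<forall>f\<in>Ar C. src C f \<in> Ob C \<and> tgt C f \<in> Ob C) \<and>
     (\<forall>a\<in>Ob C. idm C a \<in> hom C a a) \<and>
     (\<forall>f\<in>Ar C. \<forall>g\<in>Ar C. tgt C f = src C g \<longrightarrow> cmp C g f \<in> hom C (src C f) (tgt C g)) \<and>
     (\<forall>f\<in>Ar C. cmp C (idm C (tgt C f)) f = f \<and> cmp C f (idm C (src C f)) = f) \<and>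
     (\<forall>f\<in>Ar C. \<forall>g\<in>Ar C. \<forall>h\<in>Ar C. tgt C f = src C g \<and> tgt C g = src C h \<longrightarrow>
        cmp C h (cmp C g f) = cmp C (cmp C h g) f)"

definition preadditive :: "('o,'m) cat \<Rightarrow> bool" where
  "preadditive C \<longleftrightarrow> category C \<and>
     (\<forall>a\<in>Ob C. \<forall>b\<in>Ob C.
        zro C a b \<in> hom C a b \<and>
        (\<forall>f\<in>hom C a b. \<forall>g\<in>hom C a b. add C f g \<in> hom C a b \<and> add C f g = add C g f) \<and>
        (\<forall>f\<in>hom C a b. \<forall>g\<in>hom C a b. \<forall>h\<in>hom C a b. add C (add C f g) h = add C f (add C g h)) \<and>
        (\<forall>f\<in>hom C a b. add C f (zro C a b) = f) \<and>
        (\<forall>f\<in>hom C a b. \<exists>g\<in>hom C a b. add C f g = zro C a b)) \<and>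
     (\<forall>a\<in>Ob C. \<forall>b\<in>Ob C. \<forall>c\<in>Ob C.
        (\<forall>f\<in>hom C a b. \<forall>g\<in>hom C b c. \<forall>g'\<in>hom C b c.
            cmp C (add C g g') f = add C (cmp C g f) (cmp C g' f)) \<and>
        (\<forall>f\<in>hom C a b. \<forall>f'\<in>hom C a b. \<forall>g\<in>hom C b c.
            cmp C g (add C f f') = add C (cmp C g f) (cmp C g f')))"

definition is_zero_obj :: "('o,'m) cat \<Rightarrow> 'o \<Rightarrow> bool" where
  "is_zero_obj C z \<longleftrightarrow> z \<in> Ob C \<and>
     (\<forall>a\<in>Ob C. (\<exists>!f. f \<in> hom C z a) \<and> (\<exists>!f. f \<in> hom C a z))"

definition biproduct :: "('o,'m) cat \<Rightarrow> 'o \<Rightarrow> 'o \<Rightarrow> 'o \<Rightarrow> 'm \<Rightarrow> 'm \<Rightarrow> 'm \<Rightarrow> 'm \<Rightarrow> bool" where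
  "biproduct C a b c p1 p2 i1 i2 \<longleftrightarrow>
     p1 \<in> hom C c a \<and> p2 \<in> hom C c b \<and> i1 \<in> hom C a c \<and> i2 \<in> hom C b c \<and>
     cmp C p1 i1 = idm C a \<and> cmp C p2 i2 = idm C b \<and>
     cmp C p1 i2 = zro C b a \<and> cmp C p2 i1 = zro C a b \<and>
     add C (cmp C i1 p1) (cmp C i2 p2) = idm C c"

definition mono :: "('o,'m) cat \<Rightarrow> 'm \<Rightarrow> bool" where
  "mono C f \<longleftrightarrow> f \<in> Ar C \<and>
     (\<forall>g\<in>Ar C. \<forall>h\<in>Ar C. tgt C g = src C f \<and> tgt C h = src C f \<and> src C g = src C h \<and>
        cmp C f g = cmp C f h \<longrightarrow> g = h)"

definition epi :: "('o,'m) cat \<Rightarrow> 'm \<Rightarrow> bool" where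
  "epi C f \<longleftrightarrow> f \<in> Ar C \<and>
     (\<forall>g\<in>Ar C. \<forall>h\<in>Ar C. src C g = tgt C f \<and> src C h = tgt C f \<and> tgt C g = tgt C h \<and>
        cmp C g f = cmp C h f \<longrightarrow> g = h)"

definition is_kernel :: "('o,'m) cat \<Rightarrow> 'm \<Rightarrow> 'm \<Rightarrow> bool" where
  "is_kernel C k f \<longleftrightarrow> f \<in> Ar C \<and> k \<in> Ar C \<and> tgt C k = src C f \<and>
     cmp C f k = zro C (src C k) (tgt C f) \<and>
     (\<forall>x\<in>Ob C. \<forall>g\<in>hom C x (src C f). cmp C f g = zro C x (tgt C f) \<longrightarrow>
        (\<exists>!t. t \<in> hom C x (src C k) \<and> cmp C k t = g))"

definition is_cokernel :: "('o,'m) cat \<Rightarrow> 'm \<Rightarrow> 'm \<Rightarrow> bool" where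
  "is_cokernel C c f \<longleftrightarrow> f \<in> Ar C \<and> c \<in> Ar C \<and> src C c = tgt C f \<and>
     cmp C c f = zro C (src C f) (tgt C c) \<and>
     (\<forall>x\<in>Ob C. \<forall>g\<in>hom C (tgt C f) x. cmp C g f = zro C (src C f) x \<longrightarrow>
        (\<exists>!t. t \<in> hom C (tgt C c) x \<and> cmp C t c = g))"

definition abelian :: "('o,'m) cat \<Rightarrow> bool" where
  "abelian C \<longleftrightarrow> preadditive C \<and>
     (\<exists>z. is_zero_obj C z) \<and>
     (\<forall>a\<in>Ob C. \<forall>b\<in>Ob C. \<exists>c p1 p2 i1 i2. biproduct C a b c p1 p2 i1 i2) \<and>
     (\<forall>f\<in>Ar C. \<exists>k. is_kernel C k f) \<and>
     (\<forall>f\<in>Ar C. \<exists>c. is_cokernel C c f) \<and>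
     (\<forall>f. mono C f \<longrightarrow> (\<exists>g\<in>Ar C. is_kernel C f g)) \<and>
     (\<forall>f. epi C f \<longrightarrow> (\<exists>g\<in>Ar C. is_cokernel C f g))"

definition short_exact :: "('o,'m) cat \<Rightarrow> 'm \<Rightarrow> 'm \<Rightarrow> bool" where
  "short_exact C i d \<longleftrightarrow> mono C i \<and> epi C d \<and> is_kernel C i d \<and> is_cokernel C d i"

definition fully_invariant :: "('o,'m) cat \<Rightarrow> 'm \<Rightarrow> bool" where
  "fully_invariant C i \<longleftrightarrow> mono C i \<and>
     (\<forall>h\<in>hom C (tgt C i) (tgt C i). \<exists>\<alpha>\<in>hom C (src C i) (src C i). cmp C h i = cmp C i \<alpha>)"

definition fully_coinvariant :: "('o,'m) cat \<Rightarrow> 'm \<Rightarrow> bool" where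
  "fully_coinvariant C d \<longleftrightarrow> epi C d \<and>
     (\<forall>h\<in>hom C (src C d) (src C d). \<exists>\<beta>\<in>hom C (tgt C d) (tgt C d). cmp C d h = cmp C \<beta> d)"

definition fully_invariant_ses :: "('o,'m) cat \<Rightarrow> 'm \<Rightarrow> 'm \<Rightarrow> bool" where
  "fully_invariant_ses C i d \<longleftrightarrow> short_exact C i d \<and> fully_invariant C i"

text \<open>(a : X -> F, u : X -> G) is a pullback of (i : F -> M, j : G -> M);
  for monos i, j this is the intersection F \<inter> G with its inclusions.\<close>
definition is_pullback :: "('o,'m) cat \<Rightarrow> 'm \<Rightarrow> 'm \<Rightarrow> 'm \<Rightarrow> 'm \<Rightarrow> bool" where
  "is_pullback C a u i j \<longleftrightarrow> a \<in> Ar C \<and> u \<in> Ar C \<and> i \<in> Ar C \<and> j \<in> Ar C \<and>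
     src C a = src C u \<and> tgt C a = src C i \<and> tgt C u = src C j \<and> tgt C i = tgt C j \<and>
     cmp C i a = cmp C j u \<and>
     (\<forall>x\<in>Ob C. \<forall>f\<in>hom C x (src C i). \<forall>g\<in>hom C x (src C j). cmp C i f = cmp C j g \<longrightarrow>
        (\<exists>!t. t \<in> hom C x (src C a) \<and> cmp C a t = f \<and> cmp C u t = g))"

end

theory Submission
  imports Defs
begin

text \<open>
  A morphism \<open>h : M \<rightarrow> M\<close> preserves the
  fully invariant \<open>F\<close>; if it also maps \<open>G\<close> into \<open>G\<close>, the universal property of the pullback
  \<open>F \<inter> G\<close> produces its restriction to \<open>F \<inter> G\<close>. Dually, \<open>M/(F+G)\<close> is the cokernel of the image
  of \<open>[i j] : F \<oplus> G \<rightarrow> M\<close>, hence the joint cokernel of \<open>i\<close> and \<open>j\<close>; the composite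
  \<open>M \<rightarrow> M \<rightarrow> M/(F+G)\<close> always kills \<open>F\<close>, so it descends to \<open>M/(F+G)\<close> as soon as it kills \<open>G\<close>.
  The hypotheses of (i) resp. (ii) are exactly what makes the relevant \<open>h\<close> respect \<open>G\<close>.
\<close>

definition is_joint_cokernel :: "('o,'m) cat \<Rightarrow> 'm \<Rightarrow> 'm \<Rightarrow> 'm \<Rightarrow> bool" where
  "is_joint_cokernel C c i j \<longleftrightarrow> i \<in> Ar C \<and> j \<in> Ar C \<and> tgt C j = tgt C i \<and>
     c \<in> hom C (tgt C i) (tgt C c) \<and>
     cmp C c i = zro C (src C i) (tgt C c) \<and> cmp C c j = zro C (src C j) (tgt C c) \<and>
     (\<forall>x\<in>Ob C. \<forall>f\<in>hom C (tgt C i) x.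
        cmp C f i = zro C (src C i) x \<and> cmp C f j = zro C (src C j) x \<longrightarrow>
        (\<exists>t\<in>hom C (tgt C c) x. cmp C t c = f))"

locale preadditive_category =
  fixes C :: "('o,'m) cat"
  assumes preadditive: "preadditive C"
begin

abbreviation after (infixr "\<cdot>" 55) where "g \<cdot> f \<equiv> cmp C g f"

lemma category: "category C"
  using preadditive preadditive_def by blast

lemma in_hom_iff: "f \<in> hom C a b \<longleftrightarrow> f \<in> Ar C \<and> src C f = a \<and> tgt C f = b"
  by (simp add: hom_def)

lemma arr_in_hom: "f \<in> Ar C \<Longrightarrow> f \<in> hom C (src C f) (tgt C f)"
  by (simp add: hom_def)

lemma hom_objects: "f \<in> hom C a b \<Longrightarrow> a \<in> Ob C \<and> b \<in> Ob C"
  using category unfolding category_def hom_def by auto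

lemma comp_in_hom: "f \<in> hom C a b \<Longrightarrow> g \<in> hom C b c \<Longrightarrow> g \<cdot> f \<in> hom C a c"
  using category unfolding category_def hom_def by auto

lemma comp_assoc:
  "f \<in> hom C a b \<Longrightarrow> g \<in> hom C b c \<Longrightarrow> h \<in> hom C c d \<Longrightarrow> h \<cdot> (g \<cdot> f) = (h \<cdot> g) \<cdot> f"
  using category unfolding category_def hom_def by auto

lemma comp_idm_right: "f \<in> hom C a b \<Longrightarrow> f \<cdot> idm C a = f"
  using category unfolding category_def hom_def by auto

lemma zero_in_hom: "a \<in> Ob C \<Longrightarrow> b \<in> Ob C \<Longrightarrow> zro C a b \<in> hom C a b"
  using preadditive unfolding preadditive_def by blast

lemma add_assoc:
  "f \<in> hom C a b \<Longrightarrow> g \<in> hom C a b \<Longrightarrow> h \<in> hom C a b \<Longrightarrow>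
   add C (add C f g) h = add C f (add C g h)"
  using preadditive hom_objects unfolding preadditive_def by blast

lemma add_zero_right: "f \<in> hom C a b \<Longrightarrow> add C f (zro C a b) = f"
  using preadditive hom_objects unfolding preadditive_def by blast

lemma add_inverse: "f \<in> hom C a b \<Longrightarrow> \<exists>g\<in>hom C a b. add C f g = zro C a b"
  using preadditive hom_objects unfolding preadditive_def by blast

lemma comp_add_left:
  assumes "f \<in> hom C a b" "g \<in> hom C b c" "g' \<in> hom C b c"
  shows "add C g g' \<cdot> f = add C (g \<cdot> f) (g' \<cdot> f)"
proof -
  have "a \<in> Ob C" "b \<in> Ob C" "c \<in> Ob C" using assms hom_objects by blast+
  then show ?thesis using preadditive assms unfolding preadditive_def by blast
qed

lemma comp_add_right:
  assumes "f \<in> hom C a b" "f' \<in> hom C a b" "g \<in> hom C b c"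
  shows "g \<cdot> add C f f' = add C (g \<cdot> f) (g \<cdot> f')"
proof -
  have "a \<in> Ob C" "b \<in> Ob C" "c \<in> Ob C" using assms hom_objects by blast+
  then show ?thesis using preadditive assms unfolding preadditive_def by blast
qed

lemma add_idem_eq_zero:
  assumes f: "f \<in> hom C a b" and idem: "add C f f = f"
  shows "f = zro C a b"
proof -
  obtain g where g: "g \<in> hom C a b" "add C f g = zro C a b" using add_inverse[OF f] by blast
  have "f = add C (add C f f) g" using add_assoc[OF f f g(1)] add_zero_right[OF f] g idem by simp
  then show ?thesis using idem g by simp
qed

lemma add_zero_zero: "a \<in> Ob C \<Longrightarrow> b \<in> Ob C \<Longrightarrow> add C (zro C a b) (zro C a b) = zro C a b"
  using add_zero_right zero_in_hom by blast

lemma comp_zero_left: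
  assumes f: "f \<in> hom C a b" and c: "c \<in> Ob C"
  shows "zro C b c \<cdot> f = zro C a c"
proof (rule add_idem_eq_zero)
  have ob: "a \<in> Ob C" "b \<in> Ob C" using hom_objects f by blast+
  show "zro C b c \<cdot> f \<in> hom C a c" using comp_in_hom f zero_in_hom ob c by blast
  show "add C (zro C b c \<cdot> f) (zro C b c \<cdot> f) = zro C b c \<cdot> f"
    using comp_add_left[OF f] zero_in_hom add_zero_zero ob c by metis
qed

lemma comp_zero_right:
  assumes g: "g \<in> hom C b c" and a: "a \<in> Ob C"
  shows "g \<cdot> zro C a b = zro C a c"
proof (rule add_idem_eq_zero)
  have ob: "b \<in> Ob C" "c \<in> Ob C" using hom_objects g by blast+
  show "g \<cdot> zro C a b \<in> hom C a c" using comp_in_hom g zero_in_hom ob a by blast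
  show "add C (g \<cdot> zro C a b) (g \<cdot> zro C a b) = g \<cdot> zro C a b"
    using comp_add_right[OF _ _ g] zero_in_hom add_zero_zero ob a by metis
qed

lemma biproduct_arrow_eq_zero:
  assumes B: "biproduct C a b c p1 p2 i1 i2" and f: "f \<in> hom C c y"
    and z1: "f \<cdot> i1 = zro C a y" and z2: "f \<cdot> i2 = zro C b y"
  shows "f = zro C c y"
proof -
  have H: "p1 \<in> hom C c a" "p2 \<in> hom C c b" "i1 \<in> hom C a c" "i2 \<in> hom C b c"
    and sum: "add C (i1 \<cdot> p1) (i2 \<cdot> p2) = idm C c"
    using B unfolding biproduct_def by auto
  have ob: "c \<in> Ob C" "y \<in> Ob C" using hom_objects f by blast+
  have "f = f \<cdot> add C (i1 \<cdot> p1) (i2 \<cdot> p2)" using sum comp_idm_right[OF f] by simp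
  also have "\<dots> = add C (f \<cdot> (i1 \<cdot> p1)) (f \<cdot> (i2 \<cdot> p2))"
    using comp_add_right[OF comp_in_hom comp_in_hom f] H by blast
  also have "\<dots> = add C ((f \<cdot> i1) \<cdot> p1) ((f \<cdot> i2) \<cdot> p2)"
    using comp_assoc[OF H(1) H(3) f] comp_assoc[OF H(2) H(4) f] by simp
  also have "\<dots> = zro C c y" using z1 z2 comp_zero_left H ob add_zero_zero by simp
  finally show ?thesis .
qed

lemma mono_in_hom: "mono C m \<Longrightarrow> m \<in> hom C (src C m) (tgt C m)"
  by (simp add: mono_def hom_def)

lemma monoI:
  assumes "m \<in> Ar C"
    and "\<And>x g h. g \<in> hom C x (src C m) \<Longrightarrow> h \<in> hom C x (src C m) \<Longrightarrow> m \<cdot> g = m \<cdot> h \<Longrightarrow> g = h"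
  shows "mono C m"
  using assms unfolding mono_def hom_def by auto

lemma epiI:
  assumes "e \<in> Ar C"
    and "\<And>y g h. g \<in> hom C (tgt C e) y \<Longrightarrow> h \<in> hom C (tgt C e) y \<Longrightarrow> g \<cdot> e = h \<cdot> e \<Longrightarrow> g = h"
  shows "epi C e"
  using assms unfolding epi_def hom_def by auto

lemma mono_cancel:
  "mono C m \<Longrightarrow> g \<in> hom C x (src C m) \<Longrightarrow> h \<in> hom C x (src C m) \<Longrightarrow> m \<cdot> g = m \<cdot> h \<Longrightarrow> g = h"
  unfolding mono_def hom_def by auto

lemma epi_cancel:
  "epi C e \<Longrightarrow> g \<in> hom C (tgt C e) y \<Longrightarrow> h \<in> hom C (tgt C e) y \<Longrightarrow> g \<cdot> e = h \<cdot> e \<Longrightarrow> g = h"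
  unfolding epi_def hom_def by auto

lemma mono_comp:
  assumes f: "mono C f" and g: "mono C g" and fg: "tgt C f = src C g"
  shows "mono C (g \<cdot> f)"
proof -
  have fh: "f \<in> hom C (src C f) (src C g)" and gh: "g \<in> hom C (src C g) (tgt C g)"
    using mono_in_hom[OF f] mono_in_hom[OF g] fg by simp_all
  have gf: "g \<cdot> f \<in> hom C (src C f) (tgt C g)" using comp_in_hom fh gh by blast
  show ?thesis
  proof (rule monoI)
    show "g \<cdot> f \<in> Ar C" using gf in_hom_iff by blast
    fix x u v
    assume "u \<in> hom C x (src C (g \<cdot> f))" "v \<in> hom C x (src C (g \<cdot> f))" and eq: "(g \<cdot> f) \<cdot> u = (g \<cdot> f) \<cdot> v"
    then have uv: "u \<in> hom C x (src C f)" "v \<in> hom C x (src C f)" using gf in_hom_iff by auto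
    have "g \<cdot> (f \<cdot> u) = g \<cdot> (f \<cdot> v)" using eq comp_assoc[OF _ fh gh] uv by metis
    then have "f \<cdot> u = f \<cdot> v" using mono_cancel[OF g] comp_in_hom uv fh by blast
    then show "u = v" using mono_cancel[OF f] uv by blast
  qed
qed

lemma epi_right_factor:
  assumes e: "epi C (q \<cdot> p)" and p: "p \<in> hom C a b" and q: "q \<in> hom C b c"
  shows "epi C q"
proof (rule epiI)
  show "q \<in> Ar C" using q in_hom_iff by blast
  have qp: "q \<cdot> p \<in> hom C a c" using comp_in_hom p q by blast
  fix y g h
  assume "g \<in> hom C (tgt C q) y" "h \<in> hom C (tgt C q) y" and eq: "g \<cdot> q = h \<cdot> q"
  then have g: "g \<in> hom C c y" and h: "h \<in> hom C c y" using q in_hom_iff by auto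
  have "g \<cdot> (q \<cdot> p) = h \<cdot> (q \<cdot> p)" using eq comp_assoc[OF p q g] comp_assoc[OF p q h] by simp
  moreover have "tgt C (q \<cdot> p) = c" using qp in_hom_iff by blast
  ultimately show "g = h" using epi_cancel[OF e] g h by simp
qed

lemma cokernel_in_hom: "is_cokernel C c m \<Longrightarrow> c \<in> hom C (tgt C m) (tgt C c)"
  by (simp add: is_cokernel_def hom_def)

lemma cokernel_factor:
  assumes K: "is_cokernel C c m" and g: "g \<in> hom C (tgt C m) x" and z: "g \<cdot> m = zro C (src C m) x"
  shows "\<exists>t\<in>hom C (tgt C c) x. t \<cdot> c = g"
  using K g z hom_objects unfolding is_cokernel_def by blast

lemma cokernel_epi:
  assumes K: "is_cokernel C c m"
  shows "epi C c"
proof (rule epiI)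
  have mh: "m \<in> hom C (src C m) (tgt C m)" and ch: "c \<in> hom C (tgt C m) (tgt C c)"
    and cm: "c \<cdot> m = zro C (src C m) (tgt C c)"
    using K unfolding is_cokernel_def hom_def by auto
  show "c \<in> Ar C" using ch in_hom_iff by blast
  fix y g h
  assume g: "g \<in> hom C (tgt C c) y" and h: "h \<in> hom C (tgt C c) y" and eq: "g \<cdot> c = h \<cdot> c"
  have ob: "src C m \<in> Ob C" "y \<in> Ob C" using hom_objects mh g by blast+
  have gc: "g \<cdot> c \<in> hom C (tgt C m) y" using comp_in_hom ch g by blast
  have "(g \<cdot> c) \<cdot> m = zro C (src C m) y"
    using comp_assoc[OF mh ch g] cm comp_zero_right[OF g] ob by simp
  then have "\<exists>!t. t \<in> hom C (tgt C c) y \<and> t \<cdot> c = g \<cdot> c"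
    using K ob gc unfolding is_cokernel_def by blast
  then show "g = h" using g h eq by metis
qed

lemma pullback_in_hom:
  assumes "is_pullback C a u i j"
  shows "a \<in> hom C (src C a) (src C i)" "u \<in> hom C (src C a) (src C j)"
    "i \<in> hom C (src C i) (tgt C i)" "j \<in> hom C (src C j) (tgt C i)"
  using assms unfolding is_pullback_def hom_def by auto

lemma pullback_commutes: "is_pullback C a u i j \<Longrightarrow> i \<cdot> a = j \<cdot> u"
  by (simp add: is_pullback_def)

lemma pullback_factor:
  assumes P: "is_pullback C a u i j" and f: "f \<in> hom C x (src C i)"
    and g: "g \<in> hom C x (src C j)" and eq: "i \<cdot> f = j \<cdot> g"
  shows "\<exists>t\<in>hom C x (src C a). a \<cdot> t = f \<and> u \<cdot> t = g"
  using P f g eq hom_objects unfolding is_pullback_def by blast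

lemma pullback_unique:
  assumes P: "is_pullback C a u i j" and g: "g \<in> hom C x (src C a)" and h: "h \<in> hom C x (src C a)"
    and eqa: "a \<cdot> g = a \<cdot> h" and equ: "u \<cdot> g = u \<cdot> h"
  shows "g = h"
proof -
  note H = pullback_in_hom[OF P]
  have "i \<cdot> (a \<cdot> g) = j \<cdot> (u \<cdot> g)"
    using comp_assoc[OF g H(1) H(3)] comp_assoc[OF g H(2) H(4)] pullback_commutes[OF P] by simp
  moreover have "a \<cdot> g \<in> hom C x (src C i)" "u \<cdot> g \<in> hom C x (src C j)"
    using comp_in_hom g H by blast+
  moreover have "x \<in> Ob C" using hom_objects g by blast
  ultimately have "\<exists>!t. t \<in> hom C x (src C a) \<and> a \<cdot> t = a \<cdot> g \<and> u \<cdot> t = u \<cdot> g"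
    using P unfolding is_pullback_def by blast
  then show ?thesis using g h eqa equ by metis
qed

lemma pullback_mono:
  assumes P: "is_pullback C a u i j" and i: "mono C i"
  shows "mono C u"
proof (rule monoI)
  note H = pullback_in_hom[OF P]
  show "u \<in> Ar C" using H in_hom_iff by blast
  fix x g h
  assume "g \<in> hom C x (src C u)" "h \<in> hom C x (src C u)" and eq: "u \<cdot> g = u \<cdot> h"
  then have gh: "g \<in> hom C x (src C a)" "h \<in> hom C x (src C a)" using H in_hom_iff by auto
  have "i \<cdot> (a \<cdot> g) = i \<cdot> (a \<cdot> h)"
    using comp_assoc[OF _ H(1) H(3)] comp_assoc[OF _ H(2) H(4)] pullback_commutes[OF P] eq gh
    by metis
  then have "a \<cdot> g = a \<cdot> h" using mono_cancel[OF i] comp_in_hom gh H by blast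
  then show "g = h" using pullback_unique[OF P gh] eq by blast
qed

subsection \<open>Full invariance and the intersection \<open>F \<inter> G\<close>\<close>

lemma pullback_restriction:
  assumes i: "fully_invariant C i" and P: "is_pullback C a u i j"
    and h: "h \<in> hom C (tgt C i) (tgt C i)" and g: "g \<in> hom C (src C j) (src C j)"
    and hj: "h \<cdot> j = j \<cdot> g"
  shows "\<exists>t\<in>hom C (src C a) (src C a). u \<cdot> t = g \<cdot> u"
proof -
  note H = pullback_in_hom[OF P]
  obtain \<alpha> where \<alpha>: "\<alpha> \<in> hom C (src C i) (src C i)" "h \<cdot> i = i \<cdot> \<alpha>"
    using i h unfolding fully_invariant_def by blast
  have "i \<cdot> (\<alpha> \<cdot> a) = (h \<cdot> i) \<cdot> a" using comp_assoc[OF H(1) \<alpha>(1) H(3)] \<alpha>(2) by simp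
  also have "\<dots> = h \<cdot> (j \<cdot> u)" using comp_assoc[OF H(1) H(3) h] pullback_commutes[OF P] by simp
  also have "\<dots> = j \<cdot> (g \<cdot> u)"
    using comp_assoc[OF H(2) H(4) h] comp_assoc[OF H(2) g H(4)] hj by simp
  finally have "i \<cdot> (\<alpha> \<cdot> a) = j \<cdot> (g \<cdot> u)" .
  moreover have "\<alpha> \<cdot> a \<in> hom C (src C a) (src C i)" "g \<cdot> u \<in> hom C (src C a) (src C j)"
    using comp_in_hom H \<alpha>(1) g by blast+
  ultimately show ?thesis using pullback_factor[OF P] by blast
qed

lemma fully_invariant_pullback_comp:
  assumes i: "fully_invariant C i" and j: "fully_invariant C j" and P: "is_pullback C a u i j"
  shows "fully_invariant C (j \<cdot> u)"
  unfolding fully_invariant_def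
proof (intro conjI ballI)
  note H = pullback_in_hom[OF P]
  have ju: "j \<cdot> u \<in> hom C (src C a) (tgt C i)" using comp_in_hom H by blast
  show "mono C (j \<cdot> u)"
    using mono_comp pullback_mono[OF P] i j H in_hom_iff unfolding fully_invariant_def by metis
  fix h assume "h \<in> hom C (tgt C (j \<cdot> u)) (tgt C (j \<cdot> u))"
  then have h: "h \<in> hom C (tgt C i) (tgt C i)" using ju in_hom_iff by metis
  obtain g where g: "g \<in> hom C (src C j) (src C j)" "h \<cdot> j = j \<cdot> g"
    using j h H(4) in_hom_iff unfolding fully_invariant_def by metis
  obtain t where t: "t \<in> hom C (src C a) (src C a)" "u \<cdot> t = g \<cdot> u"
    using pullback_restriction[OF i P h g] by blast
  have "h \<cdot> (j \<cdot> u) = (j \<cdot> u) \<cdot> t"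
    using comp_assoc[OF H(2) H(4) h] comp_assoc[OF H(2) g(1) H(4)] comp_assoc[OF t(1) H(2) H(4)] g(2) t(2)
    by simp
  then show "\<exists>\<alpha>\<in>hom C (src C (j \<cdot> u)) (src C (j \<cdot> u)). h \<cdot> (j \<cdot> u) = (j \<cdot> u) \<cdot> \<alpha>"
    using t(1) ju in_hom_iff by metis
qed

lemma fully_invariant_pullback_leg:
  assumes i: "fully_invariant C i" and P: "is_pullback C a u i j"
    and extend: "\<forall>g\<in>hom C (src C j) (src C j). \<exists>h\<in>hom C (tgt C i) (tgt C i). h \<cdot> j = j \<cdot> g"
  shows "fully_invariant C u"
  unfolding fully_invariant_def
proof (intro conjI ballI)
  note H = pullback_in_hom[OF P]
  show "mono C u" using pullback_mono[OF P] i unfolding fully_invariant_def by blast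
  fix g assume "g \<in> hom C (tgt C u) (tgt C u)"
  then have g: "g \<in> hom C (src C j) (src C j)" using H in_hom_iff by metis
  obtain h where "h \<in> hom C (tgt C i) (tgt C i)" "h \<cdot> j = j \<cdot> g" using extend g by blast
  then show "\<exists>\<alpha>\<in>hom C (src C u) (src C u). g \<cdot> u = u \<cdot> \<alpha>"
    using pullback_restriction[OF i P _ g] H in_hom_iff by metis
qed

subsection \<open>Full coinvariance and the quotient \<open>M/(F+G)\<close>\<close>

lemma image_cokernel_is_joint_cokernel:
  assumes B: "biproduct C (src C i) (src C j) B \<pi>1 \<pi>2 \<iota>1 \<iota>2"
    and s: "s \<in> hom C B M" and si: "s \<cdot> \<iota>1 = i" and sj: "s \<cdot> \<iota>2 = j"
    and e: "epi C e" "e \<in> hom C B (src C m)" and me: "m \<cdot> e = s" and K: "is_cokernel C c m"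
  shows "is_joint_cokernel C c i j"
proof -
  have \<iota>: "\<iota>1 \<in> hom C (src C i) B" "\<iota>2 \<in> hom C (src C j) B" using B unfolding biproduct_def by auto
  have "m \<in> Ar C" using K unfolding is_cokernel_def by blast
  then have mh: "m \<in> hom C (src C m) M" using comp_in_hom[OF e(2) arr_in_hom] me s in_hom_iff by metis
  then have ch: "c \<in> hom C M (tgt C c)" using cokernel_in_hom[OF K] in_hom_iff by metis
  have ih: "i \<in> hom C (src C i) M" and jh: "j \<in> hom C (src C j) M"
    using si sj comp_in_hom \<iota> s by blast+
  have kills: "f \<cdot> i = (f \<cdot> s) \<cdot> \<iota>1" "f \<cdot> j = (f \<cdot> s) \<cdot> \<iota>2" if "f \<in> hom C M x" for f x
    using comp_assoc[OF \<iota>(1) s that] comp_assoc[OF \<iota>(2) s that] si sj by simp_all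
  have ob: "src C i \<in> Ob C" "src C j \<in> Ob C" "tgt C c \<in> Ob C"
    using hom_objects \<iota> ch by blast+
  have "c \<cdot> s = (c \<cdot> m) \<cdot> e" using comp_assoc[OF e(2) mh ch] me by simp
  also have "\<dots> = zro C B (tgt C c)"
    using K comp_zero_left[OF e(2)] ob mh in_hom_iff unfolding is_cokernel_def by metis
  finally have cs: "c \<cdot> s = zro C B (tgt C c)" .
  have factor: "\<exists>t\<in>hom C (tgt C c) x. t \<cdot> c = f"
    if f: "f \<in> hom C M x" and fi: "f \<cdot> i = zro C (src C i) x" and fj: "f \<cdot> j = zro C (src C j) x" for f x
  proof -
    have fs: "f \<cdot> s \<in> hom C B x" using comp_in_hom s f by blast
    have "f \<cdot> s = zro C B x" using biproduct_arrow_eq_zero[OF B fs] kills[OF f] fi fj by simp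
    then have "(f \<cdot> m) \<cdot> e = zro C (src C m) x \<cdot> e"
      using comp_assoc[OF e(2) mh f] me comp_zero_left[OF e(2)] hom_objects f by metis
    moreover have "f \<cdot> m \<in> hom C (tgt C e) x" "zro C (src C m) x \<in> hom C (tgt C e) x"
      using comp_in_hom mh f zero_in_hom hom_objects e in_hom_iff by metis+
    ultimately have "f \<cdot> m = zro C (src C m) x" using epi_cancel[OF e(1)] by blast
    then show ?thesis using cokernel_factor[OF K] f mh in_hom_iff by metis
  qed
  have "c \<cdot> i = zro C (src C i) (tgt C c)" "c \<cdot> j = zro C (src C j) (tgt C c)"
    using kills[OF ch] cs comp_zero_left[OF \<iota>(1)] comp_zero_left[OF \<iota>(2)] ob by simp_all
  moreover have "\<forall>x\<in>Ob C. \<forall>f\<in>hom C M x.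
      f \<cdot> i = zro C (src C i) x \<and> f \<cdot> j = zro C (src C j) x \<longrightarrow> (\<exists>t\<in>hom C (tgt C c) x. t \<cdot> c = f)"
    using factor by blast
  moreover have "i \<in> Ar C" "j \<in> Ar C" "tgt C i = M" "tgt C j = M"
    using ih jh in_hom_iff by auto
  ultimately show ?thesis
    unfolding is_joint_cokernel_def using ch by simp
qed

lemma joint_cokernel_descends:
  assumes i: "fully_invariant C i" and K: "is_joint_cokernel C c i j"
    and h: "h \<in> hom C (tgt C i) (tgt C i)" and hj: "c \<cdot> (h \<cdot> j) = zro C (src C j) (tgt C c)"
  shows "\<exists>\<beta>\<in>hom C (tgt C c) (tgt C c). c \<cdot> h = \<beta> \<cdot> c"
proof -
  have ch: "c \<in> hom C (tgt C i) (tgt C c)" and ci: "c \<cdot> i = zro C (src C i) (tgt C c)"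
    and ih: "i \<in> hom C (src C i) (tgt C i)" and jh: "j \<in> hom C (src C j) (tgt C i)"
    using K unfolding is_joint_cokernel_def hom_def by auto
  obtain \<alpha> where \<alpha>: "\<alpha> \<in> hom C (src C i) (src C i)" "h \<cdot> i = i \<cdot> \<alpha>"
    using i h unfolding fully_invariant_def by blast
  have "(c \<cdot> h) \<cdot> i = (c \<cdot> i) \<cdot> \<alpha>"
    using comp_assoc[OF ih h ch] comp_assoc[OF \<alpha>(1) ih ch] \<alpha>(2) by simp
  also have "\<dots> = zro C (src C i) (tgt C c)" using ci comp_zero_left[OF \<alpha>(1)] ch hom_objects by metis
  finally have "(c \<cdot> h) \<cdot> i = zro C (src C i) (tgt C c)" .
  moreover have "(c \<cdot> h) \<cdot> j = zro C (src C j) (tgt C c)"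
    using comp_assoc[OF jh h ch] hj by simp
  moreover have "c \<cdot> h \<in> hom C (tgt C i) (tgt C c)" using comp_in_hom h ch by blast
  ultimately obtain \<beta> where "\<beta> \<in> hom C (tgt C c) (tgt C c)" "\<beta> \<cdot> c = c \<cdot> h"
    using K hom_objects ch unfolding is_joint_cokernel_def by blast
  then show ?thesis by metis
qed

lemma fully_coinvariant_joint_cokernel:
  assumes i: "fully_invariant C i" and j: "fully_invariant C j"
    and K: "is_joint_cokernel C c i j" and c: "epi C c"
  shows "fully_coinvariant C c"
  unfolding fully_coinvariant_def
proof (intro conjI ballI)
  have ch: "c \<in> hom C (tgt C i) (tgt C c)" and cj: "c \<cdot> j = zro C (src C j) (tgt C c)"
    and jh: "j \<in> hom C (src C j) (tgt C i)"
    using K unfolding is_joint_cokernel_def hom_def by auto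
  show "epi C c" by (fact c)
  fix h assume "h \<in> hom C (src C c) (src C c)"
  then have h: "h \<in> hom C (tgt C i) (tgt C i)" using ch in_hom_iff by metis
  obtain \<alpha> where \<alpha>: "\<alpha> \<in> hom C (src C j) (src C j)" "h \<cdot> j = j \<cdot> \<alpha>"
    using j h jh in_hom_iff unfolding fully_invariant_def by metis
  have "c \<cdot> (h \<cdot> j) = (c \<cdot> j) \<cdot> \<alpha>" using comp_assoc[OF \<alpha>(1) jh ch] \<alpha>(2) by simp
  also have "\<dots> = zro C (src C j) (tgt C c)"
    using cj comp_zero_left[OF \<alpha>(1)] ch hom_objects by metis
  finally show "\<exists>\<beta>\<in>hom C (tgt C c) (tgt C c). c \<cdot> h = \<beta> \<cdot> c"
    using joint_cokernel_descends[OF i K h] by blast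
qed

lemma fully_coinvariant_induced_quotient:
  assumes i: "fully_invariant C i" and K: "is_joint_cokernel C c i j" and c: "epi C c"
    and P: "is_cokernel C p j" and q: "q \<in> hom C (tgt C p) (tgt C c)" and qp: "q \<cdot> p = c"
    and lift: "\<forall>g\<in>hom C (tgt C p) (tgt C p). \<exists>h\<in>hom C (src C p) (src C p). p \<cdot> h = g \<cdot> p"
  shows "fully_coinvariant C q"
  unfolding fully_coinvariant_def
proof (intro conjI ballI)
  have jh: "j \<in> hom C (src C j) (tgt C i)" and ch: "c \<in> hom C (tgt C i) (tgt C c)"
    using K unfolding is_joint_cokernel_def hom_def by auto
  have ph: "p \<in> hom C (tgt C i) (tgt C p)" and pj: "p \<cdot> j = zro C (src C j) (tgt C p)"
    using P jh unfolding is_cokernel_def hom_def by auto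
  have ob: "src C j \<in> Ob C" using jh hom_objects by blast
  show "epi C q" using epi_right_factor[OF _ ph q] c qp by simp
  fix g assume "g \<in> hom C (src C q) (src C q)"
  then have g: "g \<in> hom C (tgt C p) (tgt C p)" using q in_hom_iff by metis
  obtain h where h: "h \<in> hom C (tgt C i) (tgt C i)" and ph_gp: "p \<cdot> h = g \<cdot> p"
    using lift g ph in_hom_iff by metis
  have "c \<cdot> (h \<cdot> j) = q \<cdot> ((p \<cdot> h) \<cdot> j)"
    using qp comp_assoc[OF jh h ch] comp_assoc[OF jh h ph] comp_assoc[OF comp_in_hom[OF jh h] ph q]
    by simp
  also have "\<dots> = q \<cdot> (g \<cdot> zro C (src C j) (tgt C p))" using ph_gp comp_assoc[OF jh ph g] pj by simp
  also have "\<dots> = zro C (src C j) (tgt C c)" using comp_zero_right g q ob by simp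
  finally obtain \<beta> where \<beta>: "\<beta> \<in> hom C (tgt C c) (tgt C c)" "c \<cdot> h = \<beta> \<cdot> c"
    using joint_cokernel_descends[OF i K h] by blast
  have "(\<beta> \<cdot> q) \<cdot> p = (q \<cdot> g) \<cdot> p"
    using comp_assoc[OF ph q \<beta>(1)] comp_assoc[OF h ph q] comp_assoc[OF ph g q] qp \<beta>(2) ph_gp by simp
  moreover have "\<beta> \<cdot> q \<in> hom C (tgt C p) (tgt C c)" "q \<cdot> g \<in> hom C (tgt C p) (tgt C c)"
    using comp_in_hom q \<beta>(1) g by blast+
  ultimately have "q \<cdot> g = \<beta> \<cdot> q" using epi_cancel[OF cokernel_epi[OF P]] by metis
  then show "\<exists>\<beta>\<in>hom C (tgt C q) (tgt C q). q \<cdot> g = \<beta> \<cdot> q" using \<beta>(1) q in_hom_iff by metis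
qed

end

theorem proposition2p7:
  fixes C :: "('o,'m) cat" and i d j p :: 'm
  assumes "abelian C"
    and "fully_invariant_ses C i d"
    and "short_exact C j p"
    and "tgt C i = tgt C j"
  shows
   "(\<forall>a u. is_pullback C a u i j \<longrightarrow>
        (fully_invariant_ses C j p \<longrightarrow> fully_invariant C (cmp C j u)) \<and>
        ((\<forall>g\<in>hom C (src C j) (src C j). \<exists>h\<in>hom C (tgt C j) (tgt C j). cmp C h j = cmp C j g)
            \<longrightarrow> fully_invariant C u))
    \<and>
    (\<forall>B \<pi>1 \<pi>2 \<iota>1 \<iota>2 s m e c q.
        biproduct C (src C i) (src C j) B \<pi>1 \<pi>2 \<iota>1 \<iota>2 \<and>
        s \<in> hom C B (tgt C i) \<and> cmp C s \<iota>1 = i \<and> cmp C s \<iota>2 = j \<and>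
        mono C m \<and> epi C e \<and> e \<in> hom C B (src C m) \<and> cmp C m e = s \<and>
        is_cokernel C c m \<and>
        q \<in> hom C (tgt C p) (tgt C c) \<and> cmp C q p = c \<longrightarrow>
        (fully_invariant_ses C j p \<longrightarrow> fully_coinvariant C (cmp C q p)) \<and>
        ((\<forall>g\<in>hom C (tgt C p) (tgt C p). \<exists>h\<in>hom C (src C p) (src C p). cmp C p h = cmp C g p)
            \<longrightarrow> fully_coinvariant C q))"
proof -
  interpret preadditive_category C
    using assms(1) unfolding abelian_def by unfold_locales blast
  have i: "fully_invariant C i" using assms(2) unfolding fully_invariant_ses_def by blast
  have p: "is_cokernel C p j" using assms(3) unfolding short_exact_def by blast
  have ses_j: "fully_invariant C j" if "fully_invariant_ses C j p"
    using that unfolding fully_invariant_ses_def by blast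
  show ?thesis
  proof (intro conjI allI impI)
    fix a u assume P: "is_pullback C a u i j"
    show "fully_invariant C (cmp C j u)" if "fully_invariant_ses C j p"
      using fully_invariant_pullback_comp[OF i ses_j[OF that] P] .
    show "fully_invariant C u"
      if "\<forall>g\<in>hom C (src C j) (src C j). \<exists>h\<in>hom C (tgt C j) (tgt C j). cmp C h j = cmp C j g"
      using fully_invariant_pullback_leg[OF i P] that assms(4) by simp
  next
    fix B \<pi>1 \<pi>2 \<iota>1 \<iota>2 s m e c q
    assume "biproduct C (src C i) (src C j) B \<pi>1 \<pi>2 \<iota>1 \<iota>2 \<and>
        s \<in> hom C B (tgt C i) \<and> cmp C s \<iota>1 = i \<and> cmp C s \<iota>2 = j \<and>
        mono C m \<and> epi C e \<and> e \<in> hom C B (src C m) \<and> cmp C m e = s \<and>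
        is_cokernel C c m \<and>
        q \<in> hom C (tgt C p) (tgt C c) \<and> cmp C q p = c"
    then have K: "is_joint_cokernel C c i j" and c: "epi C c"
      and q: "q \<in> hom C (tgt C p) (tgt C c)" and qp: "cmp C q p = c"
      using image_cokernel_is_joint_cokernel cokernel_epi by blast+
    show "fully_coinvariant C (cmp C q p)" if "fully_invariant_ses C j p"
      using fully_coinvariant_joint_cokernel[OF i ses_j[OF that] K c] qp by simp
    show "fully_coinvariant C q"
      if "\<forall>g\<in>hom C (tgt C p) (tgt C p). \<exists>h\<in>hom C (src C p) (src C p). cmp C p h = cmp C g p"
      using fully_coinvariant_induced_quotient[OF i K c p q qp that] .
  qed
qed

end
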